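(* For any $b,c\in\mathbb C\setminus\{-1,-2,-3,\dots\}$, with $f$ and $h$ as defined in the context, \[f(b,c)=\frac{c+1}{b+1}\cdot\frac{h(b)}{h(c)}.\]
   Context: Let $u_n=(-1)^{s_2(n)}$, where $s_2(n)$ is the sum of the binary digits of the non-negative integer $n$ (Thue–Morse sequence with values $\pm1$). For $b,c\in\mathbb C\setminus\{-1,-2,-3,\dots\}$ define $f(b,c)=\prod_{n=1}^\infty\left(\frac{n+b}{n+c}\right)^{u_n}$ (limit of partial products; this converges for all such $b,c$). Define $h(x)=f\left(\frac x2,\frac{x+1}{2}\right)=\prod_{n=1}^\infty\left(\frac{2n+x}{2n+1+x}\right)^{u_n}$ for $x\in\mathbb C\setminus\{-2,-3,-4,\dots\}$. *)

theory Defs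
  imports "HOL-Analysis.Analysis"
begin

fun s2 :: "nat \<Rightarrow> nat" where
  "s2 n = (if n = 0 then 0 else n mod 2 + s2 (n div 2))"

definition u :: "nat \<Rightarrow> int" where
  "u n = (-1) ^ s2 n"

definition f :: "complex \<Rightarrow> complex \<Rightarrow> complex" where
  "f b c = lim (\<lambda>N. \<Prod>n=1..N. ((of_nat n + b) / (of_nat n + c)) powi u n)"

definition h :: "complex \<Rightarrow> complex" where
  "h x = f (x / 2) ((x + 1) / 2)"

end

theory Submission
  imports Defs "HOL-Probability.Characteristic_Functions"
begin

(* Since u (2m) = u m and u (2m+1) = - u m, grouping the factors n = 2m, 2m+1 of an odd partial
   product of f(b,c) turns it into (c+1)/(b+1) times the quotient of the m-th partial products
   of h(b) and h(c).  The same grouping shows that the partial products of h converge to a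
   nonzero limit, as the grouped factors of h are 1 + O(1/m^2); even partial products have the
   same limit because the individual factors tend to 1. *)

declare s2.simps [simp del]

lemma s2_double: "s2 (2 * n) = s2 n"
  by (cases "n = 0") (simp_all add: s2.simps[of "2 * n"])

lemma s2_double_Suc: "s2 (Suc (2 * n)) = Suc (s2 n)"
  by (simp add: s2.simps[of "Suc (2 * n)"])

lemma u_double: "u (2 * n) = u n"
  by (simp add: u_def s2_double)

lemma u_double_Suc: "u (Suc (2 * n)) = - u n"
  by (simp add: u_def s2_double_Suc)

lemma u_1: "u 1 = -1"
  using u_double_Suc[of 0] by (simp add: u_def s2.simps[of 0])

lemma u_cases: "u n = 1 \<or> u n = -1"
  by (cases "even (s2 n)") (auto simp: u_def)

definition tm_prod :: "(nat \<Rightarrow> 'a::field) \<Rightarrow> nat \<Rightarrow> 'a" where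
  "tm_prod g N = (\<Prod>n=1..N. g n powi u n)"

lemma tm_prod_Suc: "tm_prod g (Suc N) = tm_prod g N * g (Suc N) powi u (Suc N)"
  by (simp add: tm_prod_def)

lemma tm_prod_odd:
  "tm_prod g (2 * K + 1) = inverse (g 1) * (\<Prod>m=1..K. (g (2 * m) / g (2 * m + 1)) powi u m)"
proof (induction K)
  case 0
  have "u (Suc 0) = -1"
    using u_1 by simp
  then show ?case by (simp add: tm_prod_def power_int_minus1_right)
next
  case (Suc K)
  have "tm_prod g (2 * Suc K + 1)
      = tm_prod g (2 * K + 1) * (g (2 * Suc K) powi u (Suc K) * g (2 * Suc K + 1) powi - u (Suc K))"
    using tm_prod_Suc[of g "2 * K + 1"] tm_prod_Suc[of g "2 * K + 2"]
      u_double[of "Suc K"] u_double_Suc[of "Suc K"]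
    by (simp add: numeral_eq_Suc mult.assoc)
  also have "g (2 * Suc K) powi u (Suc K) * g (2 * Suc K + 1) powi - u (Suc K)
      = (g (2 * Suc K) / g (2 * Suc K + 1)) powi u (Suc K)"
    by (simp only: power_int_minus power_int_mult_distrib power_int_inverse divide_inverse)
  finally show ?case
    using Suc.IH by (simp add: mult.assoc)
qed

(* No nonvanishing hypotheses are needed: with inverse 0 = 0 the regrouping is a field identity. *)
lemma tm_prod_ratio_odd:
  "tm_prod (\<lambda>n. a n / c n) (2 * K + 1)
     = c 1 / a 1 * (tm_prod (\<lambda>n. a (2 * n) / a (2 * n + 1)) K
                    / tm_prod (\<lambda>n. c (2 * n) / c (2 * n + 1)) K)"
proof -
  have pair: "(a (2 * m) / c (2 * m)) / (a (2 * m + 1) / c (2 * m + 1))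
        = (a (2 * m) / a (2 * m + 1)) / (c (2 * m) / c (2 * m + 1))" for m
    by (simp add: divide_inverse ac_simps)
  have "tm_prod (\<lambda>n. a n / c n) (2 * K + 1)
      = c 1 / a 1 * (\<Prod>m=1..K. ((a (2 * m) / a (2 * m + 1)) / (c (2 * m) / c (2 * m + 1))) powi u m)"
    unfolding tm_prod_odd pair by (simp add: divide_inverse)
  also have "\<dots> = c 1 / a 1 * (tm_prod (\<lambda>n. a (2 * n) / a (2 * n + 1)) K
                    / tm_prod (\<lambda>n. c (2 * n) / c (2 * n + 1)) K)"
    by (simp only: tm_prod_def power_int_divide_distrib prod_dividef)
  finally show ?thesis .
qed

lemma norm_powi_sign_minus_1_le:
  fixes z :: "'a::real_normed_field"
  assumes "e = 1 \<or> e = -1"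
  shows "norm (z powi e - 1) \<le> norm (z - 1) + norm (inverse z - 1)"
  using assms by (auto simp: power_int_minus1_right)

lemma tendsto_powi_sign:
  fixes g :: "nat \<Rightarrow> 'a::real_normed_field"
  assumes g: "g \<longlonglongrightarrow> 1" and e: "\<And>n. e n = 1 \<or> e n = -1"
  shows "(\<lambda>n. g n powi e n) \<longlonglongrightarrow> 1"
proof -
  have "(\<lambda>n. inverse (g n)) \<longlonglongrightarrow> 1"
    using tendsto_inverse[OF g] by simp
  then have "(\<lambda>n. norm (g n - 1) + norm (inverse (g n) - 1)) \<longlonglongrightarrow> 0"
    using g by (intro tendsto_add_zero tendsto_norm_zero LIM_zero)
  then have "(\<lambda>n. g n powi e n - 1) \<longlonglongrightarrow> 0"
    by (rule Lim_null_comparison[rotated]) (intro always_eventually allI norm_powi_sign_minus_1_le e)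
  then show ?thesis
    by (rule LIM_zero_cancel)
qed

lemma tm_prod_LIMSEQ_of_odd:
  fixes g :: "nat \<Rightarrow> 'a::real_normed_field"
  assumes g: "g \<longlonglongrightarrow> 1" and odd: "(\<lambda>K. tm_prod g (2 * K + 1)) \<longlonglongrightarrow> L"
  shows "tm_prod g \<longlonglongrightarrow> L"
proof (rule limseq_even_odd[OF _ odd])
  let ?t = "\<lambda>K. g (2 * K + 1) powi u (2 * K + 1)"
  have "(\<lambda>K. g (2 * K + 1)) \<longlonglongrightarrow> 1"
    using LIMSEQ_subseq_LIMSEQ[OF g, of "\<lambda>K. 2 * K + 1"] by (simp add: strict_mono_def o_def)
  then have t: "?t \<longlonglongrightarrow> 1"
    by (rule tendsto_powi_sign) (rule u_cases)
  have "(\<lambda>K. tm_prod g (2 * K + 1) / ?t K) \<longlonglongrightarrow> L"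
    using tendsto_divide[OF odd t] by simp
  moreover have "\<forall>\<^sub>F K in sequentially. tm_prod g (2 * K + 1) / ?t K = tm_prod g (2 * K)"
    using tendsto_imp_eventually_ne[OF t one_neq_zero] by eventually_elim (simp add: tm_prod_Suc)
  ultimately show "(\<lambda>K. tm_prod g (2 * K)) \<longlonglongrightarrow> L"
    by (rule Lim_transform_eventually)
qed

lemma summable_norm_inverse_minus_1:
  fixes p :: "nat \<Rightarrow> 'a::real_normed_field"
  assumes p: "summable (\<lambda>n. norm (p n - 1))"
  shows "summable (\<lambda>n. norm (inverse (p n) - 1))"
proof (rule summable_comparison_test_ev)
  show "summable (\<lambda>n. 2 * norm (p n - 1))"
    using p by (rule summable_mult)
  have "(\<lambda>n. p n - 1) \<longlonglongrightarrow> 0"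
    using summable_LIMSEQ_zero[OF p] by (simp add: tendsto_norm_zero_iff)
  then have "(\<lambda>n. norm (p n)) \<longlonglongrightarrow> 1"
    using tendsto_norm[OF LIM_zero_cancel] by fastforce
  then have "\<forall>\<^sub>F n in sequentially. norm (p n) > 1 / 2"
    by (rule order_tendstoD) simp
  then show "\<forall>\<^sub>F n in sequentially. norm (norm (inverse (p n) - 1)) \<le> 2 * norm (p n - 1)"
  proof eventually_elim
    case (elim n)
    then have "p n \<noteq> 0"
      by auto
    then have "inverse (p n) - 1 = (1 - p n) / p n"
      by (simp add: field_simps)
    then have "norm (inverse (p n) - 1) = norm (p n - 1) / norm (p n)"
      by (simp add: norm_divide norm_minus_commute)
    also have "\<dots> \<le> norm (p n - 1) / (1 / 2)"
      using elim by (intro divide_left_mono) auto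
    finally show ?case by simp
  qed
qed

lemma LIMSEQ_prod_powi_sign_nonzero:
  fixes q :: "nat \<Rightarrow> 'a::{real_normed_field, complete_space}"
  assumes q: "\<And>m. q m \<noteq> 0" and sum: "summable (\<lambda>m. norm (q m - 1))"
    and e: "\<And>m. e m = 1 \<or> e m = -1"
  shows "\<exists>L. L \<noteq> 0 \<and> (\<lambda>K. \<Prod>m<K. q m powi e m) \<longlonglongrightarrow> L"
proof -
  let ?w = "\<lambda>m. q m powi e m"
  have "summable (\<lambda>m. norm (?w m - 1))"
    by (rule summable_comparison_test[OF _ summable_add[OF sum summable_norm_inverse_minus_1[OF sum]]])
       (simp add: norm_powi_sign_minus_1_le e)
  then have "convergent_prod ?w"
    by (intro abs_convergent_prod_imp_convergent_prod summable_imp_abs_convergent_prod)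
  moreover have "?w m \<noteq> 0" for m
    using q by simp
  ultimately show ?thesis
    using has_prod_imp_tendsto'[OF convergent_prod_has_prod] prodinf_nonzero by blast
qed

lemma LIMSEQ_of_nat_plus_ratio:
  fixes a b :: "'a::real_normed_field"
  shows "(\<lambda>n. (of_nat n + a) / (of_nat n + b)) \<longlonglongrightarrow> 1"
proof -
  have "(\<lambda>n. (1 + a / of_nat n) / (1 + b / of_nat n)) \<longlonglongrightarrow> (1 + 0) / (1 + 0)"
    by (intro tendsto_intros lim_const_over_n) simp
  moreover have "\<forall>\<^sub>F n in sequentially.
      (1 + a / of_nat n) / (1 + b / of_nat n) = (of_nat n + a) / (of_nat n + b)"
  proof (rule eventually_sequentiallyI[of 1])
    fix n :: nat assume "n \<ge> 1"
    then have "(of_nat n :: 'a) \<noteq> 0" by simp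
    moreover have "1 + a / of_nat n = (of_nat n + a) / of_nat n" "1 + b / of_nat n = (of_nat n + b) / of_nat n"
      using calculation by (simp_all add: field_simps)
    ultimately show "(1 + a / of_nat n) / (1 + b / of_nat n) = (of_nat n + a) / (of_nat n + b)"
      by simp
  qed
  ultimately show ?thesis
    by (simp add: Lim_transform_eventually)
qed

lemma summable_norm_inverse_quadratic:
  fixes a b :: complex
  shows "summable (\<lambda>n. norm (1 / ((of_nat n + a) * (of_nat n + b))))"
proof (rule summable_comparison_test_ev)
  show "summable (\<lambda>n::nat. 4 * inverse (real n ^ 2))"
    by (intro summable_mult inverse_power_summable) auto
  have half_le: "real n / 2 \<le> norm (of_nat n + z)" if "2 * norm z \<le> real n" for n and z :: complex
    using norm_triangle_ineq4[of "of_nat n + z" z] that by simp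
  have "\<forall>\<^sub>F n in sequentially. 2 * norm a + 2 * norm b + 1 \<le> real n"
    using filterlim_real_sequentially by (simp add: filterlim_at_top)
  then show "\<forall>\<^sub>F n in sequentially.
      norm (norm (1 / ((of_nat n + a) * (of_nat n + b)))) \<le> 4 * inverse (real n ^ 2)"
  proof eventually_elim
    case (elim n)
    then have n: "2 * norm a \<le> real n" "2 * norm b \<le> real n" "1 \<le> real n"
      using norm_ge_zero[of a] norm_ge_zero[of b] by linarith+
    have "real n / 2 * (real n / 2) \<le> norm (of_nat n + a) * norm (of_nat n + b)"
      using half_le[OF n(1)] half_le[OF n(2)] n(3) by (intro mult_mono) auto
    then have "1 / (norm (of_nat n + a) * norm (of_nat n + b)) \<le> 1 / (real n / 2 * (real n / 2))"
      using n(3) by (intro frac_le) auto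
    also have "\<dots> = 4 * inverse (real n ^ 2)"
      by (simp add: power2_eq_square inverse_eq_divide)
    finally show "norm (norm (1 / ((of_nat n + a) * (of_nat n + b)))) \<le> 4 * inverse (real n ^ 2)"
      by (simp add: norm_divide norm_mult)
  qed
qed

lemma quotient_pair_minus_1:
  fixes y :: "'a::field"
  assumes "y + 1 \<noteq> 0" "y + 2 \<noteq> 0" "y + 3 \<noteq> 0"
  shows "(y / (y + 1)) / ((y + 2) / (y + 3)) - 1 = - 2 / ((y + 1) * (y + 2))"
proof -
  have "(y / (y + 1)) / ((y + 2) / (y + 3)) = ((y + 1) * (y + 2) - 2) / ((y + 1) * (y + 2))"
    using assms by (simp add: field_simps)
  then show ?thesis
    using assms by (simp add: diff_divide_distrib)
qed

lemma h_eq_lim: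
  "h x = lim (tm_prod (\<lambda>n. (of_nat (2 * n) + x) / (of_nat (2 * n + 1) + x)))"
proof -
  have "(of_nat n + x / 2) / (of_nat n + (x + 1) / 2)
      = (of_nat (2 * n) + x) / (of_nat (2 * n + 1) + x)" for n
  proof -
    have "(of_nat n + x / 2) / (of_nat n + (x + 1) / 2)
        = (2 * (of_nat n + x / 2)) / (2 * (of_nat n + (x + 1) / 2))"
      by (rule mult_divide_mult_cancel_left[symmetric]) simp
    then show ?thesis
      by (simp add: algebra_simps)
  qed
  then show ?thesis
    unfolding h_def f_def tm_prod_def[abs_def] by (simp only:)
qed

lemma h_grouped_factor:
  fixes x :: complex
  assumes x: "\<And>k. k \<ge> 1 \<Longrightarrow> of_nat k + x \<noteq> 0"
  defines "g \<equiv> \<lambda>n. (of_nat (2 * n) + x) / (of_nat (2 * n + 1) + x)"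
  shows "g (2 * Suc m) / g (2 * Suc m + 1) \<noteq> 0"
    and "g (2 * Suc m) / g (2 * Suc m + 1) - 1
           = - (1 / 8) * (1 / ((of_nat m + (5 + x) / 4) * (of_nat m + (6 + x) / 4)))"
proof -
  define y where "y = of_nat (4 * m + 4) + x"
  have y: "y \<noteq> 0" "y + 1 \<noteq> 0" "y + 2 \<noteq> 0" "y + 3 \<noteq> 0"
    using x[of "4 * m + 4"] x[of "4 * m + 5"] x[of "4 * m + 6"] x[of "4 * m + 7"]
    by (simp_all add: y_def add_ac)
  have q_eq: "g (2 * Suc m) / g (2 * Suc m + 1) = (y / (y + 1)) / ((y + 2) / (y + 3))"
    by (simp add: g_def y_def algebra_simps)
  then show "g (2 * Suc m) / g (2 * Suc m + 1) \<noteq> 0"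
    using y by simp
  have "g (2 * Suc m) / g (2 * Suc m + 1) - 1 = - 2 / ((y + 1) * (y + 2))"
    using q_eq quotient_pair_minus_1[OF y(2-4)] by simp
  also have "(y + 1) * (y + 2) = 16 * ((of_nat m + (5 + x) / 4) * (of_nat m + (6 + x) / 4))"
    by (simp add: y_def field_simps)
  finally show "g (2 * Suc m) / g (2 * Suc m + 1) - 1
      = - (1 / 8) * (1 / ((of_nat m + (5 + x) / 4) * (of_nat m + (6 + x) / 4)))"
    by simp
qed

lemma LIMSEQ_h:
  fixes x :: complex
  assumes x: "\<And>k. k \<ge> 1 \<Longrightarrow> of_nat k + x \<noteq> 0"
  shows "tm_prod (\<lambda>n. (of_nat (2 * n) + x) / (of_nat (2 * n + 1) + x)) \<longlonglongrightarrow> h x"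
    and "h x \<noteq> 0"
proof -
  define g where "g = (\<lambda>n. (of_nat (2 * n) + x) / (of_nat (2 * n + 1) + x))"
  define q where "q m = g (2 * Suc m) / g (2 * Suc m + 1)" for m
  have odd: "tm_prod g (2 * K + 1) = inverse (g 1) * (\<Prod>m<K. q m powi u (Suc m))" for K
    unfolding tm_prod_odd by (simp only: One_nat_def prod.atLeast1_atMost_eq q_def)
  have q: "q m \<noteq> 0" "q m - 1 = - (1 / 8) * (1 / ((of_nat m + (5 + x) / 4) * (of_nat m + (6 + x) / 4)))"
    for m
    unfolding q_def g_def using h_grouped_factor[OF x] by simp_all
  have "norm (q m - 1) = 1 / 8 * norm (1 / ((of_nat m + (5 + x) / 4) * (of_nat m + (6 + x) / 4)))" for m
    unfolding q(2) norm_mult norm_minus_cancel by simp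
  then have "summable (\<lambda>m. norm (q m - 1))"
    using summable_mult[OF summable_norm_inverse_quadratic] by presburger
  then obtain P where P: "P \<noteq> 0" "(\<lambda>K. \<Prod>m<K. q m powi u (Suc m)) \<longlonglongrightarrow> P"
    using LIMSEQ_prod_powi_sign_nonzero[of q "\<lambda>m. u (Suc m)"] q u_cases by blast
  have "g 1 \<noteq> 0"
    using x[of 2] x[of 3] by (simp add: g_def add_ac)
  have "(\<lambda>n. g n) \<longlonglongrightarrow> 1"
    using LIMSEQ_subseq_LIMSEQ[OF LIMSEQ_of_nat_plus_ratio[of x "1 + x"], of "\<lambda>n. 2 * n"]
    by (simp add: g_def strict_mono_def o_def add_ac)
  moreover have "(\<lambda>K. tm_prod g (2 * K + 1)) \<longlonglongrightarrow> inverse (g 1) * P"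
    unfolding odd by (intro tendsto_intros P)
  ultimately have lim: "tm_prod g \<longlonglongrightarrow> inverse (g 1) * P"
    by (rule tm_prod_LIMSEQ_of_odd)
  then have "h x = inverse (g 1) * P"
    unfolding h_eq_lim g_def[symmetric] by (rule limI)
  then show "tm_prod (\<lambda>n. (of_nat (2 * n) + x) / (of_nat (2 * n + 1) + x)) \<longlonglongrightarrow> h x" "h x \<noteq> 0"
    using lim P \<open>g 1 \<noteq> 0\<close> by (simp_all add: g_def)
qed

theorem lemma3:
  fixes b c :: complex
  assumes "\<forall>k::nat. k \<ge> 1 \<longrightarrow> b \<noteq> - of_nat k"
      and "\<forall>k::nat. k \<ge> 1 \<longrightarrow> c \<noteq> - of_nat k"
  shows "f b c = (c + 1) / (b + 1) * (h b / h c)"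
proof -
  have b: "of_nat k + b \<noteq> 0" and c: "of_nat k + c \<noteq> 0" if "k \<ge> 1" for k
    using assms that by (metis add.commute add_eq_0_iff)+
  let ?H = "\<lambda>x. tm_prod (\<lambda>n. (of_nat (2 * n) + x) / (of_nat (2 * n + 1) + x))"
  let ?g = "\<lambda>n. (of_nat n + b) / (of_nat n + c)"
  have "?H b \<longlonglongrightarrow> h b" "?H c \<longlonglongrightarrow> h c" "h c \<noteq> 0"
    using LIMSEQ_h[OF b] LIMSEQ_h[OF c] by auto
  then have "(\<lambda>K. (c + 1) / (b + 1) * (?H b K / ?H c K)) \<longlonglongrightarrow> (c + 1) / (b + 1) * (h b / h c)"
    by (intro tendsto_intros)
  moreover have "tm_prod ?g (2 * K + 1) = (c + 1) / (b + 1) * (?H b K / ?H c K)" for K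
    using tm_prod_ratio_odd[of "\<lambda>n. of_nat n + b" "\<lambda>n. of_nat n + c"] by (simp add: add_ac)
  ultimately have "(\<lambda>K. tm_prod ?g (2 * K + 1)) \<longlonglongrightarrow> (c + 1) / (b + 1) * (h b / h c)"
    by simp
  then have "tm_prod ?g \<longlonglongrightarrow> (c + 1) / (b + 1) * (h b / h c)"
    by (rule tm_prod_LIMSEQ_of_odd[OF LIMSEQ_of_nat_plus_ratio])
  then show ?thesis
    unfolding f_def tm_prod_def[symmetric] by (rule limI)
qed

end
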